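(* Let $S$ be a $\Sigma_1$-sequent, $H$ a Herbrand structure of $S$, $D=(U_1,\dots,U_q)\circ W$ a decomposition of $H$ with $W=\{\bar w_1,\dots,\bar w_k\}$, and $S^\sim$ the schematic extended Herbrand sequent of $S$ w.r.t. $D$. Let $A$ be a formula in conjunctive normal form such that $[X\backslash\lambda\bar\alpha.A]$ is a solution of $S^\sim$. Then the procedure $\mathrm{SF}$ described below terminates on input $A$, and for every $B\in\mathrm{SF}(A)$, $[X\backslash\lambda\bar\alpha.B]$ is a solution of $S^\sim$. Procedure $\mathrm{SF}(A)$: (i) replace $A$ by the CNF obtained from $A$ by deleting all clauses containing none of the variables $\alpha_1,\dots,\alpha_n$; (ii) set $R:=\{A\}$; (iii) for each $B\in\mathrm{forget}(A)$: if the sequent $B[\bar\alpha\backslash\bar w_1],\dots,B[\bar\alpha\backslash\bar w_k],\Gamma\vdash\Delta$ is E-valid, set $R:=R\cup\mathrm{SF}(B)$; (iv) return $R$.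
   Context: We work in first-order predicate logic with equality. A $\Sigma_1$-sequent is a sequent $S$ of the form $\forall\bar x_1 F_1,\dots,\forall\bar x_p F_p\vdash\exists\bar x_{p+1}F_{p+1},\dots,\exists\bar x_q F_q$, where each $F_i$ is quantifier-free and $\bar x_i$ is a block of $k_i\ge 0$ variables. A sequent is E-valid if it is valid in predicate logic with equality (a quantifier-free formula or sequent with free variables is called E-valid if its universal closure is); a quasi-tautology is a quantifier-free E-valid sequent. A Herbrand structure of $S$ is a tuple $H=(H_1,\dots,H_q)$, $H_i$ a finite set of $k_i$-vectors of ground terms, such that, with $\mathcal F_i=\{F_i[\bar x_i\backslash\bar t]:\bar t\in H_i\}$ if $k_i>0$ and $\mathcal F_i=\{F_i\}$ if $k_i=0$, the sequent $\mathcal F_1\cup\dots\cup\mathcal F_p\vdash\mathcal F_{p+1}\cup\dots\cup\mathcal F_q$ is a quasi-tautology. A decomposition of $H$ is a pair $D=(U_1,\dots,U_q)\circ W$ where, for fresh variables $\bar\alpha=(\alpha_1,\dots,\alpha_n)$, each $U_i$ is a finite set of $k_i$-vectors of terms possibly containing the $\alpha_j$, and $W=\{\bar w_1,\dots,\bar w_k\}$ is a finite set of $n$-vectors of ground terms not containing any $\alpha_j$, such that $H_i=\{u[\bar\alpha\backslash\bar w]:u\in U_i,\bar w\in W\}$ for every $i$ with $k_i>0$. Put $\mathcal F'_i=\{F_i[\bar x_i\backslash\bar t]:\bar t\in U_i\}$ if $k_i>0$ and $\mathcal F'_i=\{F_i\}$ if $k_i=0$, and let $\Gamma=\mathcal F'_1\cup\dots\cup\mathcal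 F'_p$, $\Delta=\mathcal F'_{p+1}\cup\dots\cup\mathcal F'_q$. For an $n$-place predicate variable $X$, the schematic extended Herbrand sequent of $S$ w.r.t. $D$ is $S^\sim:\ X\bar\alpha\to\bigwedge_{i=1}^k X\bar w_i,\ \Gamma\vdash\Delta$. For a quantifier-free formula $A$ whose free variables are among $\alpha_1,\dots,\alpha_n$, $[X\backslash\lambda\bar\alpha.A]$ is a solution of $S^\sim$ if $S^\sim[X\backslash\lambda\bar\alpha.A]$ is a quasi-tautology. Forgetful reasoning: a CNF is regarded as a finite set of clauses $\{C_i\}_{i\in I}$ (the $\alpha_j$ being treated as constants). For clauses $C_1,C_2$, $\mathrm{res}(C_1,C_2)$ is the set of propositional resolvents of $C_1,C_2$ and $\mathrm{para}(C_1,C_2)$ is the set of clauses obtainable from $C_1,C_2$ by one ground paramodulation step. For a formula $F$ with CNF $\{C_i\}_{i\in I}$, $$\mathrm{forget}(F)=\Big\{C\wedge\bigwedge_{i\in I\setminus\{j,m\}}C_i\ \Big|\ j,m\in I,\ C\in\mathrm{res}(C_j,C_m)\cup\mathrm{para}(C_j,C_m)\Big\}.$$ *)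

theory Defs
  imports Main
begin

text \<open>Inside the matrix F_i of a Sigma_1-sequent, Var j (j < k_i) is the j-th variable
  of the block x_i.  Inside U_i, Gamma, Delta and the CNFs, Var j (j < n) is the
  fresh variable alpha_(j+1).\<close>

datatype 'f trm = Var nat | Fn 'f "'f trm list"

datatype ('f, 'p) atom = Pred 'p "'f trm list" | Equ "'f trm" "'f trm"

datatype ('f, 'p) fm =
    At "('f, 'p) atom" | Bot | Neg "('f, 'p) fm" | Conj "('f, 'p) fm" "('f, 'p) fm"
  | Disj "('f, 'p) fm" "('f, 'p) fm" | Imp "('f, 'p) fm" "('f, 'p) fm"

fun fv_trm :: "'f trm \<Rightarrow> nat set" where
  "fv_trm (Var j) = {j}"
| "fv_trm (Fn f ts) = (\<Union>t\<in>set ts. fv_trm t)"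

definition ground :: "'f trm \<Rightarrow> bool" where
  "ground t \<longleftrightarrow> fv_trm t = {}"

fun fv_atom :: "('f, 'p) atom \<Rightarrow> nat set" where
  "fv_atom (Pred P ts) = (\<Union>t\<in>set ts. fv_trm t)"
| "fv_atom (Equ s t) = fv_trm s \<union> fv_trm t"

fun fv_fm :: "('f, 'p) fm \<Rightarrow> nat set" where
  "fv_fm (At a) = fv_atom a"
| "fv_fm Bot = {}"
| "fv_fm (Neg F) = fv_fm F"
| "fv_fm (Conj F G) = fv_fm F \<union> fv_fm G"
| "fv_fm (Disj F G) = fv_fm F \<union> fv_fm G"
| "fv_fm (Imp F G) = fv_fm F \<union> fv_fm G"

fun subst_trm :: "(nat \<Rightarrow> 'f trm) \<Rightarrow> 'f trm \<Rightarrow> 'f trm" where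
  "subst_trm \<theta> (Var j) = \<theta> j"
| "subst_trm \<theta> (Fn f ts) = Fn f (map (subst_trm \<theta>) ts)"

fun subst_atom :: "(nat \<Rightarrow> 'f trm) \<Rightarrow> ('f, 'p) atom \<Rightarrow> ('f, 'p) atom" where
  "subst_atom \<theta> (Pred P ts) = Pred P (map (subst_trm \<theta>) ts)"
| "subst_atom \<theta> (Equ s t) = Equ (subst_trm \<theta> s) (subst_trm \<theta> t)"

fun subst_fm :: "(nat \<Rightarrow> 'f trm) \<Rightarrow> ('f, 'p) fm \<Rightarrow> ('f, 'p) fm" where
  "subst_fm \<theta> (At a) = At (subst_atom \<theta> a)"
| "subst_fm \<theta> Bot = Bot"
| "subst_fm \<theta> (Neg F) = Neg (subst_fm \<theta> F)"
| "subst_fm \<theta> (Conj F G) = Conj (subst_fm \<theta> F) (subst_fm \<theta> G)"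
| "subst_fm \<theta> (Disj F G) = Disj (subst_fm \<theta> F) (subst_fm \<theta> G)"
| "subst_fm \<theta> (Imp F G) = Imp (subst_fm \<theta> F) (subst_fm \<theta> G)"

definition vsub :: "'f trm list \<Rightarrow> nat \<Rightarrow> 'f trm" where
  "vsub ts j = (if j < length ts then ts ! j else Var j)"

text \<open>Since only quantifier-free sequents (with finitely many terms) are ever
  evaluated, validity over all such interpretations coincides with E-validity.\<close>

record 'a intp =
  fint :: "'a \<Rightarrow> nat list \<Rightarrow> nat"

fun eval_trm :: "('f \<Rightarrow> nat list \<Rightarrow> nat) \<Rightarrow> (nat \<Rightarrow> nat) \<Rightarrow> 'f trm \<Rightarrow> nat" where
  "eval_trm fI \<sigma> (Var j) = \<sigma> j"
| "eval_trm fI \<sigma> (Fn f ts) = fI f (map (eval_trm fI \<sigma>) ts)"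

fun holds_atom :: "('f \<Rightarrow> nat list \<Rightarrow> nat) \<Rightarrow> ('p \<Rightarrow> nat list \<Rightarrow> bool) \<Rightarrow> (nat \<Rightarrow> nat)
    \<Rightarrow> ('f, 'p) atom \<Rightarrow> bool" where
  "holds_atom fI pI \<sigma> (Pred P ts) = pI P (map (eval_trm fI \<sigma>) ts)"
| "holds_atom fI pI \<sigma> (Equ s t) = (eval_trm fI \<sigma> s = eval_trm fI \<sigma> t)"

fun holds :: "('f \<Rightarrow> nat list \<Rightarrow> nat) \<Rightarrow> ('p \<Rightarrow> nat list \<Rightarrow> bool) \<Rightarrow> (nat \<Rightarrow> nat)
    \<Rightarrow> ('f, 'p) fm \<Rightarrow> bool" where
  "holds fI pI \<sigma> (At a) = holds_atom fI pI \<sigma> a"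
| "holds fI pI \<sigma> Bot = False"
| "holds fI pI \<sigma> (Neg F) = (\<not> holds fI pI \<sigma> F)"
| "holds fI pI \<sigma> (Conj F G) = (holds fI pI \<sigma> F \<and> holds fI pI \<sigma> G)"
| "holds fI pI \<sigma> (Disj F G) = (holds fI pI \<sigma> F \<or> holds fI pI \<sigma> G)"
| "holds fI pI \<sigma> (Imp F G) = (holds fI pI \<sigma> F \<longrightarrow> holds fI pI \<sigma> G)"

text \<open>A quantifier-free sequent Gamma |- Delta is E-valid (a quasi-tautology)
  iff its universal closure is valid in every structure with equality.\<close>
definition quasi_taut :: "('f, 'p) fm set \<Rightarrow> ('f, 'p) fm set \<Rightarrow> bool" where
  "quasi_taut \<Gamma> \<Delta> \<longleftrightarrow> finite \<Gamma> \<and> finite \<Delta> \<and>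
     (\<forall>fI pI \<sigma>. (\<forall>F\<in>\<Gamma>. holds fI pI \<sigma> F) \<longrightarrow> (\<exists>G\<in>\<Delta>. holds fI pI \<sigma> G))"

section \<open>Sigma_1-sequents, Herbrand structures, decompositions\<close>

text \<open>A Sigma_1-sequent is given by a list S of pairs (k_i, F_i), i < q = length S, and
  the number p of antecedent formulas: entries i < p are the formulas forall x_i F_i of
  the antecedent, entries p <= i < q the formulas exists x_i F_i of the succedent.\<close>

definition sigma1_seq :: "(nat \<times> ('f, 'p) fm) list \<Rightarrow> nat \<Rightarrow> bool" where
  "sigma1_seq S p \<longleftrightarrow> p \<le> length S \<and> (\<forall>(k, F)\<in>set S. fv_fm F \<subseteq> {..<k})"

definition inst :: "(nat \<times> ('f, 'p) fm) list \<Rightarrow> nat \<Rightarrow> 'f trm list set \<Rightarrow> ('f, 'p) fm set" where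
  "inst S i T = (if fst (S ! i) > 0 then (\<lambda>t. subst_fm (vsub t) (snd (S ! i))) ` T
                 else {snd (S ! i)})"

definition herbrand_structure ::
    "(nat \<times> ('f, 'p) fm) list \<Rightarrow> nat \<Rightarrow> 'f trm list set list \<Rightarrow> bool" where
  "herbrand_structure S p H \<longleftrightarrow> length H = length S \<and>
     (\<forall>i < length S. finite (H ! i) \<and>
        (\<forall>t\<in>H ! i. length t = fst (S ! i) \<and> (\<forall>u\<in>set t. ground u))) \<and>
     quasi_taut (\<Union>i<p. inst S i (H ! i)) (\<Union>i\<in>{p..<length S}. inst S i (H ! i))"

definition decomposition ::
    "(nat \<times> ('f, 'p) fm) list \<Rightarrow> 'f trm list set list \<Rightarrow> nat \<Rightarrow> 'f trm list set list
     \<Rightarrow> 'f trm list set \<Rightarrow> bool" where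
  "decomposition S H n U W \<longleftrightarrow> length U = length S \<and>
     (\<forall>i < length S. finite (U ! i) \<and>
        (\<forall>u\<in>U ! i. length u = fst (S ! i) \<and> (\<forall>s\<in>set u. fv_trm s \<subseteq> {..<n}))) \<and>
     finite W \<and> (\<forall>w\<in>W. length w = n \<and> (\<forall>s\<in>set w. ground s)) \<and>
     (\<forall>i < length S. fst (S ! i) > 0 \<longrightarrow>
        H ! i = {map (subst_trm (vsub w)) u | u w. u \<in> U ! i \<and> w \<in> W})"

definition Gam :: "(nat \<times> ('f, 'p) fm) list \<Rightarrow> nat \<Rightarrow> 'f trm list set list \<Rightarrow> ('f, 'p) fm set" where
  "Gam S p U = (\<Union>i<p. inst S i (U ! i))"

definition Del :: "(nat \<times> ('f, 'p) fm) list \<Rightarrow> nat \<Rightarrow> 'f trm list set list \<Rightarrow> ('f, 'p) fm set" where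
  "Del S p U = (\<Union>i\<in>{p..<length S}. inst S i (U ! i))"

text \<open>A literal is a sign (True = positive) and an atom; a clause is a finite set of
  literals; a CNF is a finite set of clauses.\<close>

type_synonym ('f, 'p) lit = "bool \<times> ('f, 'p) atom"
type_synonym ('f, 'p) clause = "('f, 'p) lit set"
type_synonym ('f, 'p) cnf = "('f, 'p) clause set"

definition is_cnf :: "('f, 'p) cnf \<Rightarrow> bool" where
  "is_cnf A \<longleftrightarrow> finite A \<and> (\<forall>C\<in>A. finite C)"

definition fv_clause :: "('f, 'p) clause \<Rightarrow> nat set" where
  "fv_clause C = (\<Union>(b, a)\<in>C. fv_atom a)"

definition fv_cnf :: "('f, 'p) cnf \<Rightarrow> nat set" where
  "fv_cnf A = (\<Union>C\<in>A. fv_clause C)"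

definition subst_cnf :: "(nat \<Rightarrow> 'f trm) \<Rightarrow> ('f, 'p) cnf \<Rightarrow> ('f, 'p) cnf" where
  "subst_cnf \<theta> A = (\<lambda>C. (\<lambda>(b, a). (b, subst_atom \<theta> a)) ` C) ` A"

definition holds_lit :: "('f \<Rightarrow> nat list \<Rightarrow> nat) \<Rightarrow> ('p \<Rightarrow> nat list \<Rightarrow> bool) \<Rightarrow> (nat \<Rightarrow> nat)
    \<Rightarrow> ('f, 'p) lit \<Rightarrow> bool" where
  "holds_lit fI pI \<sigma> L = (holds_atom fI pI \<sigma> (snd L) = fst L)"

definition holds_cnf :: "('f \<Rightarrow> nat list \<Rightarrow> nat) \<Rightarrow> ('p \<Rightarrow> nat list \<Rightarrow> bool) \<Rightarrow> (nat \<Rightarrow> nat)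
    \<Rightarrow> ('f, 'p) cnf \<Rightarrow> bool" where
  "holds_cnf fI pI \<sigma> A = (\<forall>C\<in>A. \<exists>L\<in>C. holds_lit fI pI \<sigma> L)"

text \<open>[X \ lambda alpha. A] is a solution of
  S~ :  X alpha -> /\_{w in W} X w, Gamma |- Delta
  iff A has free variables among alpha_1..alpha_n and
  A -> /\_{w in W} A[alpha \ w], Gamma |- Delta is a quasi-tautology.\<close>
definition is_solution ::
    "nat \<Rightarrow> 'f trm list set \<Rightarrow> ('f, 'p) fm set \<Rightarrow> ('f, 'p) fm set \<Rightarrow> ('f, 'p) cnf \<Rightarrow> bool" where
  "is_solution n W \<Gamma> \<Delta> A \<longleftrightarrow> is_cnf A \<and> fv_cnf A \<subseteq> {..<n} \<and> finite W \<and> finite \<Gamma> \<and> finite \<Delta> \<and>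
     (\<forall>fI pI \<sigma>. ((holds_cnf fI pI \<sigma> A \<longrightarrow> (\<forall>w\<in>W. holds_cnf fI pI \<sigma> (subst_cnf (vsub w) A)))
                   \<and> (\<forall>F\<in>\<Gamma>. holds fI pI \<sigma> F))
                \<longrightarrow> (\<exists>G\<in>\<Delta>. holds fI pI \<sigma> G))"

section \<open>Forgetful reasoning\<close>

text \<open>Propositional resolvents (the alpha_j treated as constants: no unification).\<close>
definition res :: "('f, 'p) clause \<Rightarrow> ('f, 'p) clause \<Rightarrow> ('f, 'p) clause set" where
  "res C1 C2 = {(C1 - {(b, a)}) \<union> (C2 - {(\<not> b, a)}) | b a. (b, a) \<in> C1 \<and> (\<not> b, a) \<in> C2}"

inductive repl :: "'f trm \<Rightarrow> 'f trm \<Rightarrow> 'f trm \<Rightarrow> 'f trm \<Rightarrow> bool" where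
  here: "repl s t s t"
| arg: "i < length us \<Longrightarrow> repl s t (us ! i) u' \<Longrightarrow> repl s t (Fn f us) (Fn f (us[i := u']))"

inductive repl_atom :: "'f trm \<Rightarrow> 'f trm \<Rightarrow> ('f, 'p) atom \<Rightarrow> ('f, 'p) atom \<Rightarrow> bool" where
  pred: "i < length us \<Longrightarrow> repl s t (us ! i) u' \<Longrightarrow> repl_atom s t (Pred P us) (Pred P (us[i := u']))"
| eql: "repl s t a a' \<Longrightarrow> repl_atom s t (Equ a b) (Equ a' b)"
| eqr: "repl s t b b' \<Longrightarrow> repl_atom s t (Equ a b) (Equ a b')"

definition para :: "('f, 'p) clause \<Rightarrow> ('f, 'p) clause \<Rightarrow> ('f, 'p) clause set" where
  "para C1 C2 = {(C1 - {(True, Equ s t)}) \<union> (C2 - {(b, a)}) \<union> {(b, a')} | s t b a a'.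
      (True, Equ s t) \<in> C1 \<and> (b, a) \<in> C2 \<and> (repl_atom s t a a' \<or> repl_atom t s a a')}"

definition forget :: "('f, 'p) cnf \<Rightarrow> ('f, 'p) cnf set" where
  "forget A = {insert C (A - {Cj, Cm}) | Cj Cm C.
      Cj \<in> A \<and> Cm \<in> A \<and> Cj \<noteq> Cm \<and> C \<in> res Cj Cm \<union> para Cj Cm}"

definition prune :: "nat \<Rightarrow> ('f, 'p) cnf \<Rightarrow> ('f, 'p) cnf" where
  "prune n A = {C \<in> A. \<exists>j<n. j \<in> fv_clause C}"

definition sf_test ::
    "'f trm list set \<Rightarrow> ('f, 'p) fm set \<Rightarrow> ('f, 'p) fm set \<Rightarrow> ('f, 'p) cnf \<Rightarrow> bool" where
  "sf_test W \<Gamma> \<Delta> B \<longleftrightarrow> finite W \<and> finite \<Gamma> \<and> finite \<Delta> \<and>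
     (\<forall>fI pI \<sigma>. ((\<forall>w\<in>W. holds_cnf fI pI \<sigma> (subst_cnf (vsub w) B)) \<and> (\<forall>F\<in>\<Gamma>. holds fI pI \<sigma> F))
                \<longrightarrow> (\<exists>G\<in>\<Delta>. holds fI pI \<sigma> G))"

text \<open>Termination of SF on input A: the loop of step (iii) ranges over a finite set
  and every recursive call terminates (inductively, i.e. there is no infinite
  chain of recursive calls).\<close>
inductive sf_terminates ::
    "nat \<Rightarrow> 'f trm list set \<Rightarrow> ('f, 'p) fm set \<Rightarrow> ('f, 'p) fm set \<Rightarrow> ('f, 'p) cnf \<Rightarrow> bool"
  for n W \<Gamma> \<Delta> where
  "finite (forget (prune n A)) \<Longrightarrow>
   (\<And>B. B \<in> forget (prune n A) \<Longrightarrow> sf_test W \<Gamma> \<Delta> B \<Longrightarrow> sf_terminates n W \<Gamma> \<Delta> B) \<Longrightarrow>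
   sf_terminates n W \<Gamma> \<Delta> A"

text \<open>sf_out n W Gamma Delta A B  iff  B is in SF(A).\<close>
inductive sf_out ::
    "nat \<Rightarrow> 'f trm list set \<Rightarrow> ('f, 'p) fm set \<Rightarrow> ('f, 'p) fm set \<Rightarrow> ('f, 'p) cnf \<Rightarrow> ('f, 'p) cnf \<Rightarrow> bool"
  for n W \<Gamma> \<Delta> where
  self: "sf_out n W \<Gamma> \<Delta> A (prune n A)"
| rec: "B \<in> forget (prune n A) \<Longrightarrow> sf_test W \<Gamma> \<Delta> B \<Longrightarrow> sf_out n W \<Gamma> \<Delta> B C \<Longrightarrow>
        sf_out n W \<Gamma> \<Delta> A C"

end

theory Submission
  imports Defs
begin

(* Write Sol(A) for "[X \ lambda alpha. A] is a solution of the schematic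
   sequent".  Unfolding the definition, Sol(A) says that A has its free variables among
   alpha and that two sequents are E-valid:
     (a)  Gamma |- Delta, A          and          (b)  A[alpha\w_1], ..., A[alpha\w_k], Gamma |- Delta,
   where (b) is exactly the test sf_test of step (iii) of SF.  Consequently, if Sol(A),
   B is a CNF over alpha that is entailed by A, and B passes the test, then Sol(B):
   (a) transfers along the entailment and (b) is the test.  The theorem then follows from
   three facts about the operations of SF:
     - forget is sound (resolution and ground paramodulation preserve truth), keeps the
       variables, yields finitely many CNFs, and each of them has fewer clauses;
     - pruning preserves solutions: the deleted clauses are ground, hence unaffected by
       the substitutions [alpha\w_i], and they are still available in (b) via (a);
     - termination follows by induction on the number of clauses, soundness of every
       output by induction on the derivation of "B in SF(A)". *)

section \<open>Replacement of subterms\<close>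

lemma map_update_same_image: "f x = f (xs ! i) \<Longrightarrow> map f (xs[i := x]) = map f xs"
  by (induction xs arbitrary: i) (auto split: nat.split)

lemma eval_repl:
  "repl s t u u' \<Longrightarrow> eval_trm fI \<sigma> s = eval_trm fI \<sigma> t \<Longrightarrow> eval_trm fI \<sigma> u' = eval_trm fI \<sigma> u"
proof (induction rule: repl.induct)
  case (arg i us s t u' f)
  then have "map (eval_trm fI \<sigma>) (us[i := u']) = map (eval_trm fI \<sigma>) us"
    by (intro map_update_same_image) simp
  then show ?case by simp
qed simp

lemma holds_atom_repl:
  "repl_atom s t a a' \<Longrightarrow> eval_trm fI \<sigma> s = eval_trm fI \<sigma> t \<Longrightarrow>
   holds_atom fI pI \<sigma> a' = holds_atom fI pI \<sigma> a"
proof (induction rule: repl_atom.induct)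
  case (pred i us s t u' P)
  then have "map (eval_trm fI \<sigma>) (us[i := u']) = map (eval_trm fI \<sigma>) us"
    using eval_repl[OF pred.hyps(2)] by (intro map_update_same_image) simp
  then show ?case by simp
qed (auto dest: eval_repl[where fI = fI and \<sigma> = \<sigma>])

lemma fv_repl: "repl s t u u' \<Longrightarrow> fv_trm u' \<subseteq> fv_trm u \<union> fv_trm t"
proof (induction rule: repl.induct)
  case (arg i us s t u' f)
  then have "us ! i \<in> set us" by simp
  with arg show ?case using set_update_subset_insert[of us i u'] by fastforce
qed simp

lemma fv_repl_atom: "repl_atom s t a a' \<Longrightarrow> fv_atom a' \<subseteq> fv_atom a \<union> fv_trm t"
proof (induction rule: repl_atom.induct)
  case (pred i us s t u' P)
  then have "us ! i \<in> set us" and "fv_trm u' \<subseteq> fv_trm (us ! i) \<union> fv_trm t"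
    using fv_repl[OF pred.hyps(2)] by auto
  then show ?case using set_update_subset_insert[of us i u'] by fastforce
qed (auto dest: fv_repl)

lemma finite_repl: "finite {u'. repl s t u u'}"
proof (induction u)
  case (Var x)
  have "{u'. repl s t (Var x) u'} \<subseteq> {t}" by (auto elim: repl.cases)
  then show ?case by (rule finite_subset) simp
next
  case (Fn f us)
  have "{u'. repl s t (Fn f us) u'} \<subseteq>
          {t} \<union> (\<Union>i<length us. (\<lambda>v. Fn f (us[i := v])) ` {v. repl s t (us ! i) v})"
  proof
    fix u' assume "u' \<in> {u'. repl s t (Fn f us) u'}"
    then have "repl s t (Fn f us) u'" by simp
    then show "u' \<in> {t} \<union> (\<Union>i<length us. (\<lambda>v. Fn f (us[i := v])) ` {v. repl s t (us ! i) v})"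
      by (cases rule: repl.cases) auto
  qed
  moreover have "finite ({t} \<union> (\<Union>i<length us. (\<lambda>v. Fn f (us[i := v])) ` {v. repl s t (us ! i) v}))"
    using Fn by auto
  ultimately show ?case by (rule finite_subset)
qed

lemma finite_repl_atom: "finite {a'. repl_atom s t a a'}"
proof (cases a)
  case (Pred P us)
  have "{a'. repl_atom s t a a'} \<subseteq>
          (\<Union>i<length us. (\<lambda>v. Pred P (us[i := v])) ` {v. repl s t (us ! i) v})"
  proof
    fix a' assume "a' \<in> {a'. repl_atom s t a a'}"
    then have "repl_atom s t (Pred P us) a'" using Pred by simp
    then show "a' \<in> (\<Union>i<length us. (\<lambda>v. Pred P (us[i := v])) ` {v. repl s t (us ! i) v})"
      by (cases rule: repl_atom.cases) auto
  qed
  then show ?thesis by (rule finite_subset) (simp add: finite_repl)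
next
  case (Equ l r)
  have "{a'. repl_atom s t a a'} \<subseteq> (\<lambda>v. Equ v r) ` {v. repl s t l v} \<union> (\<lambda>v. Equ l v) ` {v. repl s t r v}"
    using Equ by (auto elim: repl_atom.cases)
  then show ?thesis by (rule finite_subset) (simp add: finite_repl)
qed

section \<open>Resolution and paramodulation on clauses\<close>

abbreviation holds_clause :: "('f \<Rightarrow> nat list \<Rightarrow> nat) \<Rightarrow> ('p \<Rightarrow> nat list \<Rightarrow> bool) \<Rightarrow> (nat \<Rightarrow> nat)
    \<Rightarrow> ('f, 'p) clause \<Rightarrow> bool" where
  "holds_clause fI pI \<sigma> C \<equiv> \<exists>L\<in>C. holds_lit fI pI \<sigma> L"

lemma res_sound:
  assumes "C \<in> res C1 C2" "holds_clause fI pI \<sigma> C1" "holds_clause fI pI \<sigma> C2"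
  shows "holds_clause fI pI \<sigma> C"
proof -
  obtain b a where C: "C = (C1 - {(b, a)}) \<union> (C2 - {(\<not> b, a)})"
    using assms(1) unfolding res_def by blast
  obtain L1 L2 where L: "L1 \<in> C1" "holds_lit fI pI \<sigma> L1" "L2 \<in> C2" "holds_lit fI pI \<sigma> L2"
    using assms(2,3) by blast
  text \<open>The two resolved literals are complementary, so they cannot both be true.\<close>
  have "L1 \<noteq> (b, a) \<or> L2 \<noteq> (\<not> b, a)" using L(2,4) by (auto simp: holds_lit_def)
  then show ?thesis using C L by blast
qed

lemma para_sound:
  assumes "C \<in> para C1 C2" "holds_clause fI pI \<sigma> C1" "holds_clause fI pI \<sigma> C2"
  shows "holds_clause fI pI \<sigma> C"
proof -
  obtain s t b a a' where C: "C = (C1 - {(True, Equ s t)}) \<union> (C2 - {(b, a)}) \<union> {(b, a')}"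
    and r: "repl_atom s t a a' \<or> repl_atom t s a a'"
    using assms(1) unfolding para_def by blast
  obtain L1 L2 where L: "L1 \<in> C1" "holds_lit fI pI \<sigma> L1" "L2 \<in> C2" "holds_lit fI pI \<sigma> L2"
    using assms(2,3) by blast
  show ?thesis
  proof (cases "L1 = (True, Equ s t) \<and> L2 = (b, a)")
    case True
    text \<open>The equation s = t holds, so rewriting inside the true literal keeps it true.\<close>
    then have "eval_trm fI \<sigma> s = eval_trm fI \<sigma> t" using L(2) by (simp add: holds_lit_def)
    then have "holds_atom fI pI \<sigma> a' = holds_atom fI pI \<sigma> a"
      using r holds_atom_repl by metis
    then show ?thesis using True L(4) C by (simp add: holds_lit_def)
  qed (use C L in auto)
qed

lemma fv_res: "C \<in> res C1 C2 \<Longrightarrow> fv_clause C \<subseteq> fv_clause C1 \<union> fv_clause C2"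
  unfolding res_def fv_clause_def by auto

lemma fv_para: "C \<in> para C1 C2 \<Longrightarrow> fv_clause C \<subseteq> fv_clause C1 \<union> fv_clause C2"
proof -
  assume "C \<in> para C1 C2"
  then obtain s t b a a' where C: "C = (C1 - {(True, Equ s t)}) \<union> (C2 - {(b, a)}) \<union> {(b, a')}"
    and i: "(True, Equ s t) \<in> C1" "(b, a) \<in> C2" and r: "repl_atom s t a a' \<or> repl_atom t s a a'"
    unfolding para_def by blast
  have "fv_atom a' \<subseteq> fv_atom a \<union> fv_trm s \<union> fv_trm t" using r fv_repl_atom by blast
  moreover have "fv_atom a \<subseteq> fv_clause C2" using i unfolding fv_clause_def by auto
  moreover have "fv_trm s \<union> fv_trm t \<subseteq> fv_clause C1" using i unfolding fv_clause_def by force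
  ultimately show ?thesis using C unfolding fv_clause_def by auto
qed

lemma finite_res: "finite C1 \<Longrightarrow> finite C2 \<Longrightarrow> finite (res C1 C2) \<and> (\<forall>C\<in>res C1 C2. finite C)"
proof -
  assume f: "finite C1" "finite C2"
  have "res C1 C2 \<subseteq> (\<lambda>(b, a). (C1 - {(b, a)}) \<union> (C2 - {(\<not> b, a)})) ` C1"
    unfolding res_def by auto
  then have "finite (res C1 C2)" by (rule finite_subset) (use f(1) in simp)
  moreover have "finite C" if "C \<in> res C1 C2" for C
    using that f unfolding res_def by auto
  ultimately show ?thesis by blast
qed

lemma finite_para: "finite C1 \<Longrightarrow> finite C2 \<Longrightarrow> finite (para C1 C2) \<and> (\<forall>C\<in>para C1 C2. finite C)"
proof -
  assume f: "finite C1" "finite C2"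
  let ?rw = "\<lambda>s t a. {a'. repl_atom s t a a'} \<union> {a'. repl_atom t s a a'}"
  let ?T = "SIGMA L1:C1. SIGMA L2:C2. (case snd L1 of Equ s t \<Rightarrow> ?rw s t (snd L2) | _ \<Rightarrow> {})"
  have "finite ?T"
    using f by (intro finite_SigmaI) (auto split: atom.split simp: finite_repl_atom)
  moreover have "para C1 C2 \<subseteq> (\<lambda>(L1, L2, a'). (C1 - {L1}) \<union> (C2 - {L2}) \<union> {(fst L2, a')}) ` ?T"
  proof
    fix X assume "X \<in> para C1 C2"
    then obtain s t b a a' where X: "X = (C1 - {(True, Equ s t)}) \<union> (C2 - {(b, a)}) \<union> {(b, a')}"
      and i: "(True, Equ s t) \<in> C1" "(b, a) \<in> C2" and r: "repl_atom s t a a' \<or> repl_atom t s a a'"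
      unfolding para_def by blast
    show "X \<in> (\<lambda>(L1, L2, a'). (C1 - {L1}) \<union> (C2 - {L2}) \<union> {(fst L2, a')}) ` ?T"
      by (rule image_eqI[where x = "((True, Equ s t), (b, a), a')"]) (use X i r in auto)
  qed
  ultimately have "finite (para C1 C2)" by (simp add: finite_subset)
  moreover have "finite C" if "C \<in> para C1 C2" for C
    using that f unfolding para_def by auto
  ultimately show ?thesis by blast
qed

definition cnf_entails :: "('f, 'p) cnf \<Rightarrow> ('f, 'p) cnf \<Rightarrow> bool" where
  "cnf_entails A B \<longleftrightarrow> (\<forall>fI pI \<sigma>. holds_cnf fI pI \<sigma> A \<longrightarrow> holds_cnf fI pI \<sigma> B)"

lemma finite_forget: "is_cnf A \<Longrightarrow> finite (forget A)"
proof -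
  assume A: "is_cnf A"
  let ?T = "SIGMA Cj:A. SIGMA Cm:A. res Cj Cm \<union> para Cj Cm"
  have fin: "finite A" "\<And>C. C \<in> A \<Longrightarrow> finite C" using A unfolding is_cnf_def by auto
  have "finite (res Cj Cm \<union> para Cj Cm)" if "Cj \<in> A" "Cm \<in> A" for Cj Cm
    using finite_res[OF fin(2)[OF that(1)] fin(2)[OF that(2)]]
      finite_para[OF fin(2)[OF that(1)] fin(2)[OF that(2)]] by simp
  then have "finite ?T" using fin(1) by (intro finite_SigmaI) auto
  moreover have "forget A \<subseteq> (\<lambda>(Cj, Cm, C). insert C (A - {Cj, Cm})) ` ?T"
  proof
    fix B assume "B \<in> forget A"
    then obtain Cj Cm C where "B = insert C (A - {Cj, Cm})" "Cj \<in> A" "Cm \<in> A"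
      "C \<in> res Cj Cm \<union> para Cj Cm" unfolding forget_def by blast
    then show "B \<in> (\<lambda>(Cj, Cm, C). insert C (A - {Cj, Cm})) ` ?T"
      by (intro image_eqI[where x = "(Cj, Cm, C)"]) simp_all
  qed
  ultimately show ?thesis using finite_subset by blast
qed

lemma forget_step:
  assumes A: "is_cnf A" and B: "B \<in> forget A"
  shows "is_cnf B" "card B < card A" "fv_cnf B \<subseteq> fv_cnf A" "cnf_entails A B"
proof -
  obtain Cj Cm C where B_eq: "B = insert C (A - {Cj, Cm})" and mem: "Cj \<in> A" "Cm \<in> A" "Cj \<noteq> Cm"
    and C: "C \<in> res Cj Cm \<union> para Cj Cm"
    using B unfolding forget_def by blast
  have fin: "finite A" "finite Cj" "finite Cm" using A mem unfolding is_cnf_def by auto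
  have "finite C" using C finite_res[OF fin(2,3)] finite_para[OF fin(2,3)] by auto
  then show "is_cnf B" using A B_eq unfolding is_cnf_def by auto
  have "card (A - {Cj, Cm}) = card A - 2" and "2 \<le> card A"
    using fin mem card_mono[of A "{Cj, Cm}"] by (auto simp: card_Diff_subset)
  moreover have "card B \<le> Suc (card (A - {Cj, Cm}))"
    using fin unfolding B_eq by (simp add: card_insert_if)
  ultimately show "card B < card A" by linarith
  have "fv_clause C \<subseteq> fv_clause Cj \<union> fv_clause Cm" using C fv_res fv_para by blast
  then show "fv_cnf B \<subseteq> fv_cnf A" using mem unfolding B_eq fv_cnf_def by blast
  have "holds_cnf fI pI \<sigma> B" if "holds_cnf fI pI \<sigma> A" for fI pI \<sigma>
  proof -
    have "holds_clause fI pI \<sigma> Cj" "holds_clause fI pI \<sigma> Cm"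
      using that mem unfolding holds_cnf_def by auto
    then have "holds_clause fI pI \<sigma> C" using C res_sound para_sound by blast
    then show ?thesis using that unfolding holds_cnf_def B_eq by blast
  qed
  then show "cnf_entails A B" unfolding cnf_entails_def by blast
qed

section \<open>Pruning ground clauses\<close>

lemma subst_trm_ground: "fv_trm t = {} \<Longrightarrow> subst_trm \<theta> t = t"
  by (induction t) (auto intro: map_idI)

lemma subst_atom_ground: "fv_atom a = {} \<Longrightarrow> subst_atom \<theta> a = a"
  by (cases a) (auto intro: map_idI subst_trm_ground)

lemma subst_clause_ground:
  assumes "fv_clause C = {}"
  shows "(\<lambda>(b, a). (b, subst_atom \<theta> a)) ` C = C"
proof -
  have "(\<lambda>(b, a). (b, subst_atom \<theta> a)) ` C = (\<lambda>L. L) ` C"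
  proof (rule image_cong)
    fix L assume "L \<in> C"
    then show "(\<lambda>(b, a). (b, subst_atom \<theta> a)) L = L"
      using assms subst_atom_ground unfolding fv_clause_def by (cases L) fastforce
  qed simp
  then show ?thesis by simp
qed

lemma ground_pruned:
  assumes "fv_cnf A \<subseteq> {..<n}" "C \<in> A - prune n A"
  shows "fv_clause C = {}"
proof -
  have "fv_clause C \<subseteq> {..<n}" using assms unfolding fv_cnf_def by blast
  moreover have "\<not> (\<exists>j<n. j \<in> fv_clause C)" using assms(2) unfolding prune_def by blast
  ultimately show ?thesis by blast
qed

lemma subst_cnf_prune:
  assumes "fv_cnf A \<subseteq> {..<n}"
  shows "subst_cnf \<theta> A = subst_cnf \<theta> (prune n A) \<union> (A - prune n A)"
proof -
  have "subst_cnf \<theta> (A - prune n A) = A - prune n A"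
    using subst_clause_ground[OF ground_pruned[OF assms]] unfolding subst_cnf_def by simp
  moreover have "A = prune n A \<union> (A - prune n A)" unfolding prune_def by blast
  then have "subst_cnf \<theta> A = subst_cnf \<theta> (prune n A) \<union> subst_cnf \<theta> (A - prune n A)"
    unfolding subst_cnf_def by (metis image_Un)
  ultimately show ?thesis by simp
qed

lemma is_solution_iff:
  "is_solution n W \<Gamma> \<Delta> A \<longleftrightarrow> is_cnf A \<and> fv_cnf A \<subseteq> {..<n} \<and> finite W \<and> finite \<Gamma> \<and> finite \<Delta> \<and>
     (\<forall>fI pI \<sigma>. (\<forall>F\<in>\<Gamma>. holds fI pI \<sigma> F) \<longrightarrow> \<not> holds_cnf fI pI \<sigma> A \<longrightarrow> (\<exists>G\<in>\<Delta>. holds fI pI \<sigma> G)) \<and>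
     sf_test W \<Gamma> \<Delta> A"
  unfolding is_solution_def sf_test_def by blast

lemma solution_entailed:
  assumes "is_solution n W \<Gamma> \<Delta> A" "cnf_entails A B" "is_cnf B" "fv_cnf B \<subseteq> {..<n}"
    "sf_test W \<Gamma> \<Delta> B"
  shows "is_solution n W \<Gamma> \<Delta> B"
  using assms unfolding is_solution_iff cnf_entails_def by blast

lemma solution_prune:
  assumes sol: "is_solution n W \<Gamma> \<Delta> A"
  shows "is_solution n W \<Gamma> \<Delta> (prune n A)"
proof (rule solution_entailed[OF sol])
  have A: "is_cnf A" "fv_cnf A \<subseteq> {..<n}" and test: "sf_test W \<Gamma> \<Delta> A"
    and valid: "\<And>fI pI \<sigma>. (\<forall>F\<in>\<Gamma>. holds fI pI \<sigma> F) \<Longrightarrow> \<not> holds_cnf fI pI \<sigma> A \<Longrightarrow> \<exists>G\<in>\<Delta>. holds fI pI \<sigma> G"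
    using sol unfolding is_solution_iff by blast+
  have sub: "prune n A \<subseteq> A" unfolding prune_def by blast
  show "cnf_entails A (prune n A)" using sub unfolding cnf_entails_def holds_cnf_def by blast
  show "is_cnf (prune n A)" using A(1) sub unfolding is_cnf_def by (auto intro: finite_subset)
  show "fv_cnf (prune n A) \<subseteq> {..<n}" using A(2) sub unfolding fv_cnf_def by blast
  text \<open>Either A fails, and then Delta follows by the first half of Sol(A); or A holds,
    then so do its ground clauses, hence all A[alpha\w], and the test of A applies.\<close>
  have "\<exists>G\<in>\<Delta>. holds fI pI \<sigma> G"
    if W: "\<forall>w\<in>W. holds_cnf fI pI \<sigma> (subst_cnf (vsub w) (prune n A))" and \<Gamma>: "\<forall>F\<in>\<Gamma>. holds fI pI \<sigma> F"
    for fI pI \<sigma>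
  proof (cases "holds_cnf fI pI \<sigma> A")
    case True
    then have "\<forall>w\<in>W. holds_cnf fI pI \<sigma> (subst_cnf (vsub w) A)"
      using W subst_cnf_prune[OF A(2)] unfolding holds_cnf_def by blast
    then show ?thesis using test \<Gamma> unfolding sf_test_def by blast
  qed (use valid \<Gamma> in blast)
  then show "sf_test W \<Gamma> \<Delta> (prune n A)" using test unfolding sf_test_def by blast
qed

section \<open>Termination and soundness of SF\<close>

text \<open>SF terminates on every CNF: each recursive call receives fewer clauses.\<close>
lemma sf_terminates_cnf: "is_cnf A \<Longrightarrow> sf_terminates n W \<Gamma> \<Delta> A"
proof (induction "card A" arbitrary: A rule: less_induct)
  case less
  have P: "is_cnf (prune n A)" and "card (prune n A) \<le> card A"
    using less.prems unfolding is_cnf_def prune_def by (auto intro: card_mono)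
  then have "is_cnf B \<and> card B < card A" if "B \<in> forget (prune n A)" for B
    using forget_step[OF P that] by linarith
  then show ?case using less.hyps finite_forget[OF P] by (blast intro: sf_terminates.intros)
qed

lemma sf_out_solution:
  "sf_out n W \<Gamma> \<Delta> A B \<Longrightarrow> is_solution n W \<Gamma> \<Delta> A \<Longrightarrow> is_solution n W \<Gamma> \<Delta> B"
proof (induction rule: sf_out.induct)
  case (self A)
  then show ?case by (rule solution_prune)
next
  case (rec B A C)
  have P: "is_solution n W \<Gamma> \<Delta> (prune n A)" using rec.prems by (rule solution_prune)
  then have "is_cnf (prune n A)" "fv_cnf (prune n A) \<subseteq> {..<n}" unfolding is_solution_iff by blast+
  then have "is_solution n W \<Gamma> \<Delta> B"
    using solution_entailed[OF P] forget_step[OF _ rec.hyps(1)] rec.hyps(2) by blast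
  then show ?case by (rule rec.IH)
qed

theorem mainTheorem3:
  fixes S :: "(nat \<times> ('f, 'p) fm) list" and p n :: nat
    and H U :: "'f trm list set list" and W :: "'f trm list set" and A :: "('f, 'p) cnf"
  assumes "sigma1_seq S p"
    and "herbrand_structure S p H"
    and "decomposition S H n U W"
    and "is_cnf A"
    and "is_solution n W (Gam S p U) (Del S p U) A"
  shows "sf_terminates n W (Gam S p U) (Del S p U) A \<and>
         (\<forall>B. sf_out n W (Gam S p U) (Del S p U) A B \<longrightarrow>
              is_solution n W (Gam S p U) (Del S p U) B)"
  using sf_terminates_cnf[OF assms(4)] sf_out_solution assms(5) by blast

end
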